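(* For every $w\in[0,1]$ (with $0\log 0=0$), $$g(w)=1-\sum_{n\ge1}\frac{(n-1)^{n-1}}{n!}\bigl(-w\log w\bigr)^n$$ and $$\log g(w)=\sum_{n\ge1}\frac{(-n)^{n-1}}{n!}\bigl(w\log w\bigr)^n=W_0(w\log w),$$ the series converging absolutely; here $0^0=1$. In particular $g(w)=f(w)$ for $0\le w\le 1/e$ and $g(w)=w$ (so $W_0(w\log w)=\log w$) for $1/e\le w\le1$.
   Context: Let $\phi(x)=-x\log x$ on $[0,1]$ (with $\phi(0)=0$); it is strictly increasing on $[0,1/e]$ and strictly decreasing on $[1/e,1]$. Let $l,r$ be its restrictions to $[0,1/e]$ and $[1/e,1]$. Define $f(x)=r^{-1}(\phi(x))$ for $0\le x\le 1/e$, $f(x)=l^{-1}(\phi(x))$ for $1/e\le x\le1$, and $g(x)=r^{-1}(\phi(x))$ for $0\le x\le1$. $W_0$ denotes the principal branch of the Lambert $W$ function (the inverse of $u\mapsto ue^u$ on $[-1,\infty)$), defined on $[-1/e,\infty)$. *)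

theory Defs
  imports Complex_Main
begin

text \<open>phi(x) = -x log x on [0,1]; note 0 * ln 0 = 0 in HOL, so phi 0 = 0.\<close>
definition phi :: "real \<Rightarrow> real" where
  "phi x = - x * ln x"

definition l_inv :: "real \<Rightarrow> real" where
  "l_inv y = (THE x. x \<in> {0..exp (-1)} \<and> phi x = y)"

definition r_inv :: "real \<Rightarrow> real" where
  "r_inv y = (THE x. x \<in> {exp (-1)..1} \<and> phi x = y)"

definition f :: "real \<Rightarrow> real" where
  "f x = (if x \<le> exp (-1) then r_inv (phi x) else l_inv (phi x))"

definition g :: "real \<Rightarrow> real" where
  "g x = r_inv (phi x)"

definition W0 :: "real \<Rightarrow> real" where
  "W0 y = (THE u. u \<ge> -1 \<and> u * exp u = y)"

end

theory Submission
  imports Defs "HOL-Analysis.Analysis"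
begin

(*
  Let T(t) = \<Sum> n^(n-1) t^n / n! be the tree function.  Abel's identity
  \<Sum>k C(N,k) k^(k-1) (y+N-k)^(N-k) = N (y+N)^(N-1) (at y = 1) is exactly the coefficient
  identity behind T'(1 - T) = T/t, and this differential equation integrates to
  T(t) e^(-T(t)) = t for |t| < 1/e.  Likewise G(t) = \<Sum> (n-1)^(n-1) t^n / n! has
  G' = 1 + t T', whence 1 - G = e^(-T).  The coefficients are nonnegative and the partial sums
  at 1/e stay below 1 (as T < 1 inside), so both series converge at t = 1/e and the identities
  extend there by continuity.

  For t = phi w \<in> [0, 1/e] the point x = e^(-T(t)) lies in [1/e, 1] and
  phi x = T(t) e^(-T(t)) = t, so g w = x = 1 - G(t); moreover ln (g w) = -T(t) = W0 (-t)
  because (-T) e^(-T) = -t with -T \<ge> -1.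
*)

lemma power_div_fact_le_exp:
  fixes x :: real
  assumes "0 \<le> x"
  shows "x ^ n / fact n \<le> exp x"
proof -
  have "(\<lambda>k. x ^ k / fact k) sums exp x"
    using exp_converges[of x] by (simp add: divide_inverse_commute)
  moreover have "(\<Sum>k\<in>{n}. x ^ k / fact k) \<le> (\<Sum>k. x ^ k / fact k)"
    using calculation assms by (intro sum_le_suminf) (auto simp: sums_iff)
  ultimately show ?thesis
    by (simp add: sums_iff)
qed

lemma summable_powser_if_coeff_le_exp:
  fixes c :: "nat \<Rightarrow> real"
  assumes "\<And>n. \<bar>c n\<bar> \<le> exp (real n)" and "\<bar>z\<bar> < exp (-1)"
  shows "summable (\<lambda>n. c n * z ^ n)"
proof (rule summable_comparison_test)
  have "\<bar>exp 1 * \<bar>z\<bar>\<bar> < 1"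
    using assms(2) mult_strict_left_mono[OF assms(2), of "exp 1"] by (simp flip: exp_add)
  then show "summable (\<lambda>n. (exp 1 * \<bar>z\<bar>) ^ n)"
    by (simp add: summable_geometric)
  show "\<exists>N. \<forall>n\<ge>N. norm (c n * z ^ n) \<le> (exp 1 * \<bar>z\<bar>) ^ n"
  proof (intro exI allI impI)
    fix n
    have "norm (c n * z ^ n) \<le> exp (real n) * \<bar>z\<bar> ^ n"
      using assms(1) by (simp add: abs_mult power_abs mult_right_mono)
    also have "\<dots> = (exp 1 * \<bar>z\<bar>) ^ n"
      by (simp add: power_mult_distrib flip: exp_of_nat_mult)
    finally show "norm (c n * z ^ n) \<le> (exp 1 * \<bar>z\<bar>) ^ n" .
  qed
qed

lemma continuous_on_powser_nonneg_coeff: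
  fixes c :: "nat \<Rightarrow> real"
  assumes "\<And>n. 0 \<le> c n" and "summable (\<lambda>n. c n * r ^ n)"
  shows "continuous_on {-r..r} (\<lambda>z. \<Sum>n. c n * z ^ n)"
proof (rule uniform_limit_theorem)
  show "uniform_limit {-r..r} (\<lambda>N z. \<Sum>n<N. c n * z ^ n) (\<lambda>z. \<Sum>n. c n * z ^ n) sequentially"
  proof (rule Weierstrass_m_test[OF _ assms(2)])
    fix n and z :: real
    assume "z \<in> {-r..r}"
    then show "norm (c n * z ^ n) \<le> c n * r ^ n"
      using assms(1) by (auto simp: abs_mult power_abs intro!: mult_left_mono power_mono)
  qed
  show "\<forall>\<^sub>F N in sequentially. continuous_on {-r..r} (\<lambda>z. \<Sum>n<N. c n * z ^ n)"
    by (intro always_eventually allI continuous_intros)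
qed simp

lemma eq_at_0_if_deriv_zero:
  fixes f :: "real \<Rightarrow> real"
  assumes "\<And>z. \<bar>z\<bar> < r \<Longrightarrow> (f has_real_derivative 0) (at z)" and "\<bar>x\<bar> < r"
  shows "f x = f 0"
proof -
  have "\<exists>c. \<forall>z\<in>{-r<..<r}. f z = c"
    by (rule has_field_derivative_zero_constant) (auto intro!: has_field_derivative_at_within assms(1))
  moreover have "x \<in> {-r<..<r}" and "0 \<in> {-r<..<r}"
    using assms(2) by auto
  ultimately show ?thesis
    by metis
qed

lemma le_at_right_endpoint_if_le_inside:
  fixes f g :: "real \<Rightarrow> real"
  assumes "a < b" and "continuous_on {a..b} f" and "continuous_on {a..b} g"
    and "\<And>s. a < s \<Longrightarrow> s < b \<Longrightarrow> f s \<le> g s"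
  shows "f b \<le> g b"
proof (rule tendsto_le[OF trivial_limit_at_left_real])
  show "(f \<longlongrightarrow> f b) (at_left b)" and "(g \<longlongrightarrow> g b) (at_left b)"
    using assms by (simp_all add: continuous_on_Icc_at_leftD)
  show "\<forall>\<^sub>F s in at_left b. f s \<le> g s"
    using eventually_at_left_real[OF assms(1)] by eventually_elim (use assms(4) in auto)
qed

lemma eq_at_right_endpoint_if_eq_inside:
  fixes f g :: "real \<Rightarrow> real"
  assumes "a < b" and "continuous_on {a..b} f" and "continuous_on {a..b} g"
    and "\<And>s. a < s \<Longrightarrow> s < b \<Longrightarrow> f s = g s"
  shows "f b = g b"
  using assms le_at_right_endpoint_if_le_inside[of a b f g] le_at_right_endpoint_if_le_inside[of a b g f]
  by force

lemma minus_power_mult_minus_power_Suc: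
  fixes a t :: "'a::comm_ring_1"
  shows "(- a) ^ n * (- t) ^ Suc n = - (a ^ n * t ^ Suc n)"
proof -
  have "(- a) ^ n * (- t) ^ Suc n = (- a * - t) ^ n * - t"
    by (simp only: power_Suc power_mult_distrib ac_simps)
  then show ?thesis
    by (simp add: power_mult_distrib ac_simps)
qed

section \<open>Abel's identity\<close>

lemma alternating_binomial_power_sum:
  fixes N j :: nat
  assumes "j < N"
  shows "(\<Sum>k\<le>N. (-1) ^ k * of_nat (N choose k) * of_nat k ^ j :: 'a::comm_ring_1) = 0"
  using assms
proof (induction N arbitrary: j)
  case 0
  then show ?case by simp
next
  case (Suc M)
  show ?case
  proof (cases j)
    case 0
    then show ?thesis using choose_alternating_sum[of "Suc M", where 'a='a] by simp
  next
    case (Suc i)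
    have "(\<Sum>k\<le>Suc M. (-1) ^ k * of_nat (Suc M choose k) * of_nat k ^ j :: 'a)
        = (\<Sum>m\<le>M. (-1) ^ Suc m * of_nat (Suc m * (Suc M choose Suc m)) * of_nat (Suc m) ^ i)"
      by (subst sum.atMost_Suc_shift) (simp add: Suc algebra_simps del: binomial_Suc_Suc)
    also have "\<dots> = - of_nat (Suc M) * (\<Sum>m\<le>M. (-1) ^ m * of_nat (M choose m) * (of_nat m + 1) ^ i)"
      by (simp only: Suc_times_binomial) (simp add: sum_distrib_left algebra_simps)
    also have "(\<Sum>m\<le>M. (-1) ^ m * of_nat (M choose m) * (of_nat m + 1) ^ i :: 'a)
        = (\<Sum>l\<le>i. of_nat (i choose l) * (\<Sum>m\<le>M. (-1) ^ m * of_nat (M choose m) * of_nat m ^ l))"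
      unfolding binomial_ring[of "of_nat _" 1]
      by (simp add: sum_distrib_left sum.swap[of _ "{..M}"] algebra_simps del: binomial_Suc_Suc)
    also have "\<dots> = 0"
      using Suc.IH Suc.prems \<open>j = Suc i\<close> by (intro sum.neutral) auto
    finally show ?thesis by simp
  qed
qed

lemma abel_identity:
  "(\<Sum>k=1..N. real (N choose k) * real k ^ (k - 1) * (y + real N - real k) ^ (N - k))
    = real N * (y + real N) ^ (N - 1)"
proof (induction N arbitrary: y)
  case 0
  then show ?case by simp
next
  case (Suc M)
  define N where "N = Suc M"
  define F where "F y = (\<Sum>k=1..N. real (N choose k) * real k ^ (k - 1) * (y + real N - real k) ^ (N - k))
      - real N * (y + real N) ^ (N - 1)" for y
  show ?case
  proof (cases "M = 0")
    case True
    then show ?thesis by simp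
  next
    case False
    have "(F has_real_derivative 0) (at y)" for y
    proof -
      have derivative: "(F has_real_derivative
              (\<Sum>k=1..N. real (N choose k) * real k ^ (k - 1) * (real (N - k) * (y + real N - real k) ^ (N - k - 1)))
              - real N * (real (N - 1) * (y + real N) ^ (N - 1 - 1))) (at y)"
        unfolding F_def by (auto intro!: derivative_eq_intros sum.cong simp: ac_simps)
      have sum_eq: "(\<Sum>k=1..N. real (N choose k) * real k ^ (k - 1) * (real (N - k) * (y + real N - real k) ^ (N - k - 1)))
          = real N * (\<Sum>k=1..M. real (M choose k) * real k ^ (k - 1) * ((y + 1) + real M - real k) ^ (M - k))"
      proof -
        have summand: "real (N choose k) * real k ^ (k - 1) * (real (N - k) * (y + real N - real k) ^ (N - k - 1))
            = real N * (real (M choose k) * real k ^ (k - 1) * ((y + 1) + real M - real k) ^ (M - k))"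
          for k
        proof -
          have "real (N - k) * real (N choose k) = real N * real (M choose k)"
            using binomial_absorb_comp[of N k] unfolding N_def by (metis diff_Suc_1 of_nat_mult)
          moreover have "N - k - 1 = M - k" and "y + real N - real k = (y + 1) + real M - real k"
            by (simp_all add: N_def)
          ultimately show ?thesis
            by (simp only: ac_simps) (simp only: mult.assoc[symmetric])
        qed
        have "{1..N} = insert N {1..M}"
          by (auto simp: N_def)
        then have "(\<Sum>k=1..N. real (N choose k) * real k ^ (k - 1) * (real (N - k) * (y + real N - real k) ^ (N - k - 1)))
            = (\<Sum>k=1..M. real (N choose k) * real k ^ (k - 1) * (real (N - k) * (y + real N - real k) ^ (N - k - 1)))"
          by (simp add: N_def)
        also have "\<dots> = (\<Sum>k=1..M. real N * (real (M choose k) * real k ^ (k - 1) * ((y + 1) + real M - real k) ^ (M - k)))"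
          by (intro sum.cong refl summand)
        finally show ?thesis
          by (simp only: sum_distrib_left)
      qed
      have power_eq: "real N * (real (N - 1) * (y + real N) ^ (N - 1 - 1)) = real N * (real M * ((y + 1) + real M) ^ (M - 1))"
        by (simp add: N_def algebra_simps)
      show ?thesis
        using derivative unfolding sum_eq power_eq Suc.IH[of "y + 1"] by simp
    qed
    then have "F y = F (- real N)"
      by (rule DERIV_isconst_all[rule_format])
    also have "F (- real N) = 0"
    proof -
      have summand: "real (N choose k) * real k ^ (k - 1) * (- real k) ^ (N - k)
          = (-1) ^ N * ((-1) ^ k * real (N choose k) * real k ^ (N - 1))" if "k \<in> {1..N}" for k
      proof -
        have "(-1::real) ^ (N - k) = (-1) ^ N * (-1) ^ k"
          using that by (simp add: power_add flip: neg_one_power_add_eq_neg_one_power_diff)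
        moreover have "real k ^ (k - 1) * real k ^ (N - k) = real k ^ (N - 1)"
          using that by (simp flip: power_add)
        ultimately show ?thesis
          by (simp add: power_minus[of "real k"] algebra_simps)
      qed
      have "(\<Sum>k=1..N. real (N choose k) * real k ^ (k - 1) * (- real k) ^ (N - k))
          = (-1) ^ N * (\<Sum>k=1..N. (-1) ^ k * real (N choose k) * real k ^ (N - 1))"
        unfolding sum_distrib_left by (intro sum.cong refl summand)
      also have "\<dots> = (-1) ^ N * (\<Sum>k\<le>N. (-1) ^ k * real (N choose k) * real k ^ (N - 1))"
        using \<open>M \<noteq> 0\<close> by (simp add: N_def atMost_atLeast0 sum.atLeast_Suc_atMost)
      also have "\<dots> = 0"
        using alternating_binomial_power_sum[of "N - 1" N] by (simp add: N_def)
      finally show ?thesis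
        using \<open>M \<noteq> 0\<close> by (simp add: F_def N_def)
    qed
    finally show ?thesis
      by (simp add: F_def N_def)
  qed
qed

section \<open>The tree function\<close>

abbreviation \<rho> :: real where "\<rho> \<equiv> exp (-1)"

definition tree_coeff :: "nat \<Rightarrow> real" where
  "tree_coeff n = (if n = 0 then 0 else real n ^ (n - 1) / fact n)"

definition tree_fun :: "real \<Rightarrow> real" where
  "tree_fun z = (\<Sum>n. tree_coeff n * z ^ n)"

definition tree_fun_deriv :: "real \<Rightarrow> real" where
  "tree_fun_deriv z = (\<Sum>n. diffs tree_coeff n * z ^ n)"

definition tree_ratio :: "real \<Rightarrow> real" where
  "tree_ratio z = (\<Sum>n. tree_coeff (Suc n) * z ^ n)"

definition tree_ratio_deriv :: "real \<Rightarrow> real" where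
  "tree_ratio_deriv z = (\<Sum>n. diffs (\<lambda>n. tree_coeff (Suc n)) n * z ^ n)"

lemma tree_coeff_nonneg: "0 \<le> tree_coeff n"
  by (simp add: tree_coeff_def)

lemma tree_coeff_le_exp: "tree_coeff n \<le> exp (real n)"
proof (cases "n = 0")
  case False
  then have "tree_coeff n \<le> real n ^ n / fact n"
    by (auto simp: tree_coeff_def intro!: divide_right_mono power_increasing)
  also have "\<dots> \<le> exp (real n)"
    by (simp add: power_div_fact_le_exp)
  finally show ?thesis .
qed (simp add: tree_coeff_def)

lemma diffs_tree_coeff: "diffs tree_coeff n = real (Suc n) ^ n / fact n"
  by (simp add: diffs_def tree_coeff_def del: of_nat_Suc)

lemma tree_coeff_convolution:
  "(\<Sum>i\<le>N. tree_coeff i * diffs tree_coeff (N - i)) = diffs tree_coeff N - tree_coeff (Suc N)"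
proof (cases "N = 0")
  case True
  then show ?thesis by (simp add: diffs_tree_coeff tree_coeff_def)
next
  case False
  have "(\<Sum>i\<le>N. tree_coeff i * diffs tree_coeff (N - i)) = (\<Sum>i=1..N. tree_coeff i * diffs tree_coeff (N - i))"
    by (simp add: atMost_atLeast0 sum.atLeast_Suc_atMost tree_coeff_def)
  also have "\<dots> = (\<Sum>i=1..N. real (N choose i) * real i ^ (i - 1) * (1 + real N - real i) ^ (N - i) / fact N)"
  proof (rule sum.cong[OF refl])
    fix i assume i: "i \<in> {1..N}"
    have "tree_coeff i * diffs tree_coeff (N - i)
        = real i ^ (i - 1) / fact i * (real (Suc (N - i)) ^ (N - i) / fact (N - i))"
      using i by (simp add: tree_coeff_def diffs_tree_coeff)
    also have "\<dots> = fact N / (fact i * fact (N - i)) * real i ^ (i - 1) * real (Suc (N - i)) ^ (N - i) / fact N"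
      by simp
    also have "real (Suc (N - i)) = 1 + real N - real i"
      using i by auto
    finally show "tree_coeff i * diffs tree_coeff (N - i)
        = real (N choose i) * real i ^ (i - 1) * (1 + real N - real i) ^ (N - i) / fact N"
      using i by (simp add: binomial_fact)
  qed
  also have "\<dots> = real N * (1 + real N) ^ (N - 1) / fact N"
    using abel_identity[of N 1] by (simp add: add.commute flip: sum_divide_distrib)
  also have "\<dots> = diffs tree_coeff N - tree_coeff (Suc N)"
  proof -
    define p where "p = (1 + real N) ^ (N - 1)"
    have "(1 + real N) ^ N = (1 + real N) * p"
      using False by (simp add: p_def flip: power_Suc)
    then have "diffs tree_coeff N = (1 + real N) * p / fact N" and "tree_coeff (Suc N) = p / fact N"
      by (simp_all add: diffs_tree_coeff tree_coeff_def)
    then show ?thesis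
      by (simp add: p_def algebra_simps flip: diff_divide_distrib)
  qed
  finally show ?thesis .
qed

lemma summable_tree_series: "\<bar>z\<bar> < \<rho> \<Longrightarrow> summable (\<lambda>n. tree_coeff n * z ^ n)"
  by (rule summable_powser_if_coeff_le_exp) (simp_all add: tree_coeff_nonneg tree_coeff_le_exp)

lemma summable_tree_ratio_series: "\<bar>z\<bar> < \<rho> \<Longrightarrow> summable (\<lambda>n. tree_coeff (Suc n) * z ^ n)"
  by (simp add: summable_powser_split_head summable_tree_series)

lemma summable_norm_tree_series:
  "\<bar>z\<bar> < \<rho> \<Longrightarrow> summable (\<lambda>n. norm (tree_coeff n * z ^ n))"
  using summable_tree_series[of "\<bar>z\<bar>"] by (simp add: abs_mult power_abs tree_coeff_nonneg)

lemma summable_norm_tree_deriv_series: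
  "\<bar>z\<bar> < \<rho> \<Longrightarrow> summable (\<lambda>n. norm (diffs tree_coeff n * z ^ n))"
  using termdiff_converges[of "\<bar>z\<bar>" \<rho> tree_coeff] summable_tree_series
  by (simp add: abs_mult power_abs diffs_tree_coeff)

lemma has_field_derivative_tree_fun:
  "\<bar>z\<bar> < \<rho> \<Longrightarrow> (tree_fun has_field_derivative tree_fun_deriv z) (at z)"
  unfolding tree_fun_def[abs_def] tree_fun_deriv_def
  by (rule termdiffs_strong') (simp_all add: summable_tree_series)

lemma has_field_derivative_tree_ratio:
  "\<bar>z\<bar> < \<rho> \<Longrightarrow> (tree_ratio has_field_derivative tree_ratio_deriv z) (at z)"
  unfolding tree_ratio_def[abs_def] tree_ratio_deriv_def
  by (rule termdiffs_strong') (simp_all add: summable_tree_ratio_series)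

lemma tree_fun_0: "tree_fun 0 = 0" and tree_ratio_0: "tree_ratio 0 = 1"
  unfolding tree_fun_def tree_ratio_def powser_zero by (simp_all add: tree_coeff_def)

lemma tree_fun_eq_mult_tree_ratio: "\<bar>z\<bar> < \<rho> \<Longrightarrow> tree_fun z = z * tree_ratio z"
  using powser_split_head(1)[OF summable_tree_series]
  by (simp add: tree_fun_def tree_ratio_def tree_coeff_def mult.commute)

lemma tree_fun_deriv_mult_one_minus_tree_fun:
  assumes "\<bar>z\<bar> < \<rho>"
  shows "tree_fun_deriv z * (1 - tree_fun z) = tree_ratio z"
proof -
  have "(\<lambda>k. \<Sum>i\<le>k. tree_coeff i * z ^ i * (diffs tree_coeff (k - i) * z ^ (k - i)))
      sums (tree_fun z * tree_fun_deriv z)"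
    unfolding tree_fun_def tree_fun_deriv_def
    using assms by (intro Cauchy_product_sums summable_norm_tree_series summable_norm_tree_deriv_series)
  moreover have "(\<Sum>i\<le>k. tree_coeff i * z ^ i * (diffs tree_coeff (k - i) * z ^ (k - i)))
      = (diffs tree_coeff k - tree_coeff (Suc k)) * z ^ k" for k
    unfolding tree_coeff_convolution[symmetric] sum_distrib_right
    by (intro sum.cong refl) (simp add: algebra_simps flip: power_add)
  ultimately have "(\<lambda>k. (diffs tree_coeff k - tree_coeff (Suc k)) * z ^ k) sums (tree_fun z * tree_fun_deriv z)"
    by simp
  then have "(\<lambda>k. diffs tree_coeff k * z ^ k - (diffs tree_coeff k - tree_coeff (Suc k)) * z ^ k)
      sums (tree_fun_deriv z - tree_fun z * tree_fun_deriv z)"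
    using summable_norm_cancel[OF summable_norm_tree_deriv_series[OF assms]]
    by (intro sums_diff) (auto simp: tree_fun_deriv_def intro: summable_sums)
  then have "(\<lambda>k. tree_coeff (Suc k) * z ^ k) sums (tree_fun_deriv z - tree_fun z * tree_fun_deriv z)"
    by (simp add: algebra_simps)
  then show ?thesis
    by (simp add: tree_ratio_def sums_iff algebra_simps)
qed

lemma tree_ratio_deriv_eq:
  assumes "\<bar>z\<bar> < \<rho>"
  shows "tree_ratio_deriv z = tree_ratio z * tree_fun_deriv z"
proof (cases "z = 0")
  case True
  have "tree_ratio_deriv 0 = tree_ratio 0 * tree_fun_deriv 0"
    unfolding tree_ratio_deriv_def tree_fun_deriv_def powser_zero
    by (simp add: tree_ratio_0 diffs_def tree_coeff_def)
  then show ?thesis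
    using True by simp
next
  case False
  have "((\<lambda>s. s * tree_ratio s) has_field_derivative tree_ratio z + z * tree_ratio_deriv z) (at z)"
    using has_field_derivative_tree_ratio[OF assms] by (auto intro!: derivative_eq_intros)
  moreover have "((\<lambda>s. s * tree_ratio s) has_field_derivative tree_fun_deriv z) (at z)"
    using assms
    by (intro has_field_derivative_transform_within_open[OF has_field_derivative_tree_fun[OF assms],
          where S = "{-\<rho><..<\<rho>}"])
      (auto simp: tree_fun_eq_mult_tree_ratio abs_less_iff)
  ultimately have "tree_fun_deriv z = tree_ratio z + z * tree_ratio_deriv z"
    by (rule DERIV_unique[symmetric])
  then have "z * (tree_ratio_deriv z - tree_ratio z * tree_fun_deriv z)
      = tree_fun_deriv z * (1 - tree_fun z) - tree_ratio z"
    using tree_fun_eq_mult_tree_ratio[OF assms] by (simp add: algebra_simps)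
  then show ?thesis
    using False tree_fun_deriv_mult_one_minus_tree_fun[OF assms] by simp
qed

lemma tree_ratio_mult_exp_tree_fun:
  assumes "\<bar>z\<bar> < \<rho>"
  shows "tree_ratio z * exp (- tree_fun z) = 1"
proof -
  have "((\<lambda>s. tree_ratio s * exp (- tree_fun s)) has_real_derivative 0) (at s)" if "\<bar>s\<bar> < \<rho>" for s
    using has_field_derivative_tree_ratio[OF that] has_field_derivative_tree_fun[OF that]
      tree_ratio_deriv_eq[OF that]
    by (auto intro!: derivative_eq_intros simp: algebra_simps)
  from eq_at_0_if_deriv_zero[OF this assms] show ?thesis
    by (simp add: tree_fun_0 tree_ratio_0)
qed

lemma tree_fun_mult_exp_inside: "\<bar>z\<bar> < \<rho> \<Longrightarrow> tree_fun z * exp (- tree_fun z) = z"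
  using tree_ratio_mult_exp_tree_fun tree_fun_eq_mult_tree_ratio by (metis mult.assoc mult_1_right)

lemma tree_fun_less_1_inside:
  assumes "0 \<le> t" and "t < \<rho>"
  shows "tree_fun t < 1"
proof (rule ccontr)
  assume "\<not> tree_fun t < 1"
  moreover have "continuous_on {0..t} tree_fun"
    using assms
    by (intro continuous_at_imp_continuous_on ballI has_field_derivative_tree_fun[THEN DERIV_isCont]) auto
  ultimately obtain s where s: "0 \<le> s" "s \<le> t" "tree_fun s = 1"
    using IVT'[of tree_fun 0 1 t] assms by (auto simp: tree_fun_0)
  then have "s = \<rho>"
    using tree_fun_mult_exp_inside[of s] assms by simp
  then show False
    using s assms by simp
qed

lemma partial_tree_series_at_radius_le_1: "(\<Sum>n<N. tree_coeff n * \<rho> ^ n) \<le> 1"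
proof (rule le_at_right_endpoint_if_le_inside[of 0 _ "\<lambda>s. \<Sum>n<N. tree_coeff n * s ^ n" "\<lambda>_. 1", simplified])
  fix s :: real assume s: "0 < s" "s < \<rho>"
  have "(\<Sum>n<N. tree_coeff n * s ^ n) \<le> tree_fun s"
    unfolding tree_fun_def using s
    by (intro sum_le_suminf summable_tree_series) (auto simp: tree_coeff_nonneg)
  also have "\<dots> < 1"
    using s by (intro tree_fun_less_1_inside) auto
  finally show "(\<Sum>n<N. tree_coeff n * s ^ n) \<le> 1"
    by simp
qed (auto intro!: continuous_intros)

lemma summable_tree_series_at_radius: "summable (\<lambda>n. tree_coeff n * \<rho> ^ n)"
  by (rule summableI_nonneg_bounded[OF _ partial_tree_series_at_radius_le_1]) (simp add: tree_coeff_nonneg)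

lemma summable_tree_series_closed:
  assumes "\<bar>z\<bar> \<le> \<rho>"
  shows "summable (\<lambda>n. tree_coeff n * z ^ n)"
  using assms
  by (intro summable_comparison_test'[OF summable_tree_series_at_radius, of 0])
    (auto simp: abs_mult power_abs tree_coeff_nonneg intro!: mult_left_mono power_mono)

lemma tree_fun_le_1:
  assumes "\<bar>z\<bar> \<le> \<rho>"
  shows "tree_fun z \<le> 1"
proof -
  have "z ^ n \<le> \<rho> ^ n" for n
  proof -
    have "z ^ n \<le> \<bar>z\<bar> ^ n"
      by (metis abs_ge_self power_abs)
    also have "\<dots> \<le> \<rho> ^ n"
      using assms by (intro power_mono) auto
    finally show ?thesis .
  qed
  then have "tree_fun z \<le> (\<Sum>n. tree_coeff n * \<rho> ^ n)"
    unfolding tree_fun_def using assms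
    by (intro suminf_le summable_tree_series_closed summable_tree_series_at_radius mult_left_mono
        tree_coeff_nonneg)
  also have "\<dots> \<le> 1"
    by (intro suminf_le_const summable_tree_series_at_radius partial_tree_series_at_radius_le_1)
  finally show ?thesis .
qed

lemma tree_fun_nonneg: "0 \<le> t \<Longrightarrow> t \<le> \<rho> \<Longrightarrow> 0 \<le> tree_fun t"
  unfolding tree_fun_def by (intro suminf_nonneg summable_tree_series_closed) (auto simp: tree_coeff_nonneg)

lemma continuous_on_tree_fun: "continuous_on {-\<rho>..\<rho>} tree_fun"
  unfolding tree_fun_def[abs_def]
  by (intro continuous_on_powser_nonneg_coeff tree_coeff_nonneg summable_tree_series_at_radius)

lemma tree_fun_mult_exp:
  assumes "0 \<le> t" and "t \<le> \<rho>"
  shows "tree_fun t * exp (- tree_fun t) = t"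
proof (cases "t < \<rho>")
  case True
  then show ?thesis
    using assms tree_fun_mult_exp_inside by simp
next
  case False
  have "continuous_on {0..\<rho>} (\<lambda>s. tree_fun s * exp (- tree_fun s))"
    by (intro continuous_intros continuous_on_subset[OF continuous_on_tree_fun]) auto
  then have "tree_fun \<rho> * exp (- tree_fun \<rho>) = \<rho>"
    by (rule eq_at_right_endpoint_if_eq_inside[rotated, OF _ continuous_on_id])
      (auto intro: tree_fun_mult_exp_inside)
  then show ?thesis
    using False assms by simp
qed

section \<open>The series of 1 - g\<close>

definition G_coeff :: "nat \<Rightarrow> real" where
  "G_coeff n = (if n = 0 then 0 else real (n - 1) ^ (n - 1) / fact n)"

definition G_fun :: "real \<Rightarrow> real" where
  "G_fun z = (\<Sum>n. G_coeff n * z ^ n)"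

lemma G_coeff_nonneg: "0 \<le> G_coeff n"
  by (simp add: G_coeff_def)

lemma G_coeff_le_tree_coeff: "G_coeff n \<le> tree_coeff n"
  by (auto simp: G_coeff_def tree_coeff_def intro!: divide_right_mono power_mono)

lemma summable_G_series:
  assumes "\<bar>z\<bar> \<le> \<rho>"
  shows "summable (\<lambda>n. G_coeff n * z ^ n)"
  using assms
  by (intro summable_comparison_test'[OF summable_tree_series_closed[of "\<bar>z\<bar>"], of 0])
    (auto simp: abs_mult power_abs G_coeff_nonneg intro!: mult_right_mono G_coeff_le_tree_coeff)

lemma diffs_G_coeff_Suc: "diffs G_coeff (Suc n) = diffs tree_coeff n"
  by (simp add: diffs_def G_coeff_def tree_coeff_def)

lemma has_field_derivative_G_fun:
  assumes "\<bar>z\<bar> < \<rho>"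
  shows "(G_fun has_field_derivative 1 + z * tree_fun_deriv z) (at z)"
proof -
  have "(G_fun has_field_derivative (\<Sum>n. diffs G_coeff n * z ^ n)) (at z)"
    unfolding G_fun_def[abs_def] using assms
    by (intro termdiffs_strong') (auto intro: summable_G_series)
  moreover have "summable (\<lambda>n. diffs G_coeff n * z ^ n)"
    using assms by (intro termdiff_converges[where K = \<rho>]) (auto intro: summable_G_series)
  then have "(\<Sum>n. diffs G_coeff n * z ^ n) = diffs G_coeff 0 + (\<Sum>n. diffs tree_coeff n * z ^ n) * z"
    by (simp add: powser_split_head(1) diffs_G_coeff_Suc)
  moreover have "diffs G_coeff 0 = 1"
    by (simp add: diffs_def G_coeff_def)
  ultimately show ?thesis
    by (simp add: tree_fun_deriv_def mult.commute)
qed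

lemma one_minus_G_fun_inside:
  assumes "\<bar>z\<bar> < \<rho>"
  shows "1 - G_fun z = exp (- tree_fun z)"
proof -
  have "((\<lambda>s. 1 - G_fun s - exp (- tree_fun s)) has_real_derivative 0) (at s)" if s: "\<bar>s\<bar> < \<rho>" for s
  proof -
    have "exp (- tree_fun s) * tree_fun_deriv s - (1 + s * tree_fun_deriv s)
        = tree_fun_deriv s * (1 - tree_fun s) * exp (- tree_fun s) - 1"
      by (subst (2) tree_fun_mult_exp_inside[OF s, symmetric]) (simp add: algebra_simps)
    also have "\<dots> = 0"
      using tree_ratio_mult_exp_tree_fun[OF s] by (simp add: tree_fun_deriv_mult_one_minus_tree_fun[OF s])
    finally show ?thesis
      using has_field_derivative_G_fun[OF s] has_field_derivative_tree_fun[OF s]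
      by (auto intro!: derivative_eq_intros)
  qed
  from eq_at_0_if_deriv_zero[OF this assms] show ?thesis
    unfolding G_fun_def powser_zero by (simp add: G_coeff_def tree_fun_0)
qed

lemma one_minus_G_fun:
  assumes "0 \<le> t" and "t \<le> \<rho>"
  shows "1 - G_fun t = exp (- tree_fun t)"
proof (cases "t < \<rho>")
  case True
  then show ?thesis
    using assms one_minus_G_fun_inside by simp
next
  case False
  have "continuous_on {-\<rho>..\<rho>} G_fun"
    unfolding G_fun_def[abs_def]
    by (intro continuous_on_powser_nonneg_coeff G_coeff_nonneg summable_G_series) simp
  then have "continuous_on {0..\<rho>} (\<lambda>s. 1 - G_fun s)"
    by (intro continuous_intros) (auto elim: continuous_on_subset)
  moreover have "continuous_on {0..\<rho>} (\<lambda>s. exp (- tree_fun s))"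
    by (intro continuous_intros continuous_on_subset[OF continuous_on_tree_fun]) auto
  ultimately have "1 - G_fun \<rho> = exp (- tree_fun \<rho>)"
    by (rule eq_at_right_endpoint_if_eq_inside[rotated]) (auto intro: one_minus_G_fun_inside)
  then show ?thesis
    using False assms by simp
qed

lemma G_series_Suc_sums:
  assumes "0 \<le> t" and "t \<le> \<rho>"
  shows "(\<lambda>n. real n ^ n / fact (Suc n) * t ^ Suc n) sums (1 - exp (- tree_fun t))"
    and "summable (\<lambda>n. \<bar>real n ^ n / fact (Suc n) * t ^ Suc n\<bar>)"
proof -
  have "(\<lambda>n. G_coeff n * t ^ n) sums G_fun t"
    unfolding G_fun_def using assms by (intro summable_sums summable_G_series) auto
  then have "(\<lambda>n. G_coeff (Suc n) * t ^ Suc n) sums G_fun t"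
    by (subst sums_Suc_iff) (simp add: G_coeff_def[of 0])
  moreover have "(\<lambda>n. G_coeff (Suc n) * t ^ Suc n) = (\<lambda>n. real n ^ n / fact (Suc n) * t ^ Suc n)"
    by (simp add: G_coeff_def)
  ultimately have sums: "(\<lambda>n. real n ^ n / fact (Suc n) * t ^ Suc n) sums G_fun t"
    by simp
  moreover have "G_fun t = 1 - exp (- tree_fun t)"
    using one_minus_G_fun[OF assms] by linarith
  ultimately show "(\<lambda>n. real n ^ n / fact (Suc n) * t ^ Suc n) sums (1 - exp (- tree_fun t))"
    by simp
  show "summable (\<lambda>n. \<bar>real n ^ n / fact (Suc n) * t ^ Suc n\<bar>)"
    using sums assms by (simp add: sums_iff)
qed

lemma neg_tree_series_Suc_sums:
  assumes "0 \<le> t" and "t \<le> \<rho>"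
  shows "(\<lambda>n. (- real (Suc n)) ^ n / fact (Suc n) * (- t) ^ Suc n) sums (- tree_fun t)"
    and "summable (\<lambda>n. \<bar>(- real (Suc n)) ^ n / fact (Suc n) * (- t) ^ Suc n\<bar>)"
proof -
  have "(\<lambda>n. tree_coeff n * t ^ n) sums tree_fun t"
    unfolding tree_fun_def using assms by (intro summable_sums summable_tree_series_closed) auto
  then have "(\<lambda>n. tree_coeff (Suc n) * t ^ Suc n) sums tree_fun t"
    by (subst sums_Suc_iff) (simp add: tree_coeff_def[of 0])
  moreover have "(\<lambda>n. tree_coeff (Suc n) * t ^ Suc n) = (\<lambda>n. real (Suc n) ^ n / fact (Suc n) * t ^ Suc n)"
    by (simp add: tree_coeff_def)
  ultimately have sums: "(\<lambda>n. real (Suc n) ^ n / fact (Suc n) * t ^ Suc n) sums tree_fun t"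
    by simp
  have terms: "(- real (Suc n)) ^ n / fact (Suc n) * (- t) ^ Suc n = - (real (Suc n) ^ n / fact (Suc n) * t ^ Suc n)"
    for n
    using minus_power_mult_minus_power_Suc[of "real (Suc n)" n t] by (simp add: field_simps)
  show "(\<lambda>n. (- real (Suc n)) ^ n / fact (Suc n) * (- t) ^ Suc n) sums (- tree_fun t)"
    unfolding terms by (rule sums_minus[OF sums])
  show "summable (\<lambda>n. \<bar>(- real (Suc n)) ^ n / fact (Suc n) * (- t) ^ Suc n\<bar>)"
    unfolding terms using sums assms by (simp add: sums_iff)
qed

section \<open>Lambert W and the inverses of phi\<close>

lemma mult_exp_strict_mono: "strict_mono_on {-1..} (\<lambda>u::real. u * exp u)"
proof (rule strict_mono_onI)
  fix a b :: real
  assume "a \<in> {-1..}" and "a < b"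
  then show "a * exp a < b * exp b"
  proof (intro DERIV_pos_imp_increasing_open[OF \<open>a < b\<close>])
    fix x assume "a < x" and "x < b"
    then have "0 < (1 + x) * exp x"
      using \<open>a \<in> {-1..}\<close> by simp
    moreover have "((\<lambda>u. u * exp u) has_real_derivative (1 + x) * exp x) (at x)"
      by (auto intro!: derivative_eq_intros simp: algebra_simps)
    ultimately show "\<exists>y. ((\<lambda>u. u * exp u) has_real_derivative y) (at x) \<and> 0 < y"
      by blast
  qed (auto intro!: continuous_intros)
qed

lemma W0_mult_exp:
  assumes "-1 \<le> u"
  shows "W0 (u * exp u) = u"
  unfolding W0_def
  using assms strict_mono_on_imp_inj_on[OF mult_exp_strict_mono]
  by (intro the_equality) (auto dest: inj_onD)

lemma phi_nonneg: "0 \<le> w \<Longrightarrow> w \<le> 1 \<Longrightarrow> 0 \<le> phi w"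
  using mult_nonneg_nonpos[of w "ln w"] by (cases "w = 0") (auto simp: phi_def)

lemma phi_le_exp_minus_1:
  assumes "0 \<le> w"
  shows "phi w \<le> exp (-1)"
proof (cases "w = 0")
  case False
  then have "0 < w"
    using assms by simp
  have "- ln w = ln (exp (-1) / w) + 1"
    using \<open>0 < w\<close> by (simp add: ln_div)
  also have "\<dots> \<le> exp (-1) / w"
    using \<open>0 < w\<close> ln_le_minus_one[of "exp (-1) / w"] by simp
  finally show ?thesis
    using \<open>0 < w\<close> by (simp add: phi_def field_simps)
qed (simp add: phi_def)

lemma r_inv_phi:
  assumes "exp (-1) \<le> x" and "x \<le> 1"
  shows "r_inv (phi x) = x"
  unfolding r_inv_def
proof (rule the_equality)
  show "x \<in> {exp (-1)..1} \<and> phi x = phi x"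
    using assms by simp
next
  fix y
  assume y: "y \<in> {exp (-1)..1} \<and> phi y = phi x"
  have "0 < x" and "0 < y"
    using assms y by (auto intro: less_le_trans[OF exp_gt_zero])
  have "ln x \<in> {-1..}" and "ln y \<in> {-1..}"
    using assms y \<open>0 < x\<close> \<open>0 < y\<close> by (auto simp: ln_ge_iff)
  moreover have "ln y * exp (ln y) = ln x * exp (ln x)"
    using y \<open>0 < x\<close> \<open>0 < y\<close> by (simp add: phi_def mult.commute)
  ultimately have "ln y = ln x"
    using strict_mono_on_imp_inj_on[OF mult_exp_strict_mono] by (auto dest: inj_onD)
  then show "y = x"
    using \<open>0 < x\<close> \<open>0 < y\<close> by simp
qed

lemma g_eq_exp_minus_tree_fun:
  assumes "0 \<le> w" and "w \<le> 1"
  shows "g w = exp (- tree_fun (phi w))"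
proof -
  define t where "t = phi w"
  have t: "0 \<le> t" "t \<le> \<rho>"
    using assms phi_nonneg phi_le_exp_minus_1 by (auto simp: t_def)
  have "phi (exp (- tree_fun t)) = t"
    using tree_fun_mult_exp[OF t] by (simp add: phi_def mult.commute)
  moreover have "\<rho> \<le> exp (- tree_fun t)" and "exp (- tree_fun t) \<le> 1"
    using tree_fun_nonneg[OF t] tree_fun_le_1[of t] t by auto
  ultimately show ?thesis
    using r_inv_phi by (metis g_def t_def)
qed

lemma W0_minus_eq_minus_tree_fun:
  assumes "0 \<le> t" and "t \<le> \<rho>"
  shows "W0 (- t) = - tree_fun t"
  using W0_mult_exp[of "- tree_fun t"] tree_fun_mult_exp[OF assms] tree_fun_le_1[of t] assms by simp

theorem proposition10:
  fixes w :: real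
  assumes "0 \<le> w" and "w \<le> 1"
  shows "summable (\<lambda>n. \<bar>real n ^ n / fact (Suc n) * phi w ^ Suc n\<bar>)
    \<and> g w = 1 - (\<Sum>n. real n ^ n / fact (Suc n) * phi w ^ Suc n)
    \<and> summable (\<lambda>n. \<bar>(- real (Suc n)) ^ n / fact (Suc n) * (w * ln w) ^ Suc n\<bar>)
    \<and> g w > 0
    \<and> ln (g w) = (\<Sum>n. (- real (Suc n)) ^ n / fact (Suc n) * (w * ln w) ^ Suc n)
    \<and> ln (g w) = W0 (w * ln w)
    \<and> (w \<le> exp (-1) \<longrightarrow> g w = f w)
    \<and> (exp (-1) \<le> w \<longrightarrow> g w = w \<and> W0 (w * ln w) = ln w)"
proof -
  define t where "t = phi w"
  have t: "0 \<le> t" "t \<le> \<rho>"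
    using assms phi_nonneg phi_le_exp_minus_1 by (auto simp: t_def)
  have w_ln_w: "w * ln w = - t"
    by (simp add: t_def phi_def)
  have g: "g w = exp (- tree_fun t)"
    using g_eq_exp_minus_tree_fun[OF assms] by (simp add: t_def)
  have ln_g: "ln (g w) = W0 (w * ln w)"
    using W0_minus_eq_minus_tree_fun[OF t] by (simp add: g w_ln_w)
  have "(\<Sum>n. real n ^ n / fact (Suc n) * phi w ^ Suc n) = 1 - g w"
    and "summable (\<lambda>n. \<bar>real n ^ n / fact (Suc n) * phi w ^ Suc n\<bar>)"
    using G_series_Suc_sums[OF t] by (simp_all add: sums_iff g t_def)
  moreover have "(\<Sum>n. (- real (Suc n)) ^ n / fact (Suc n) * (w * ln w) ^ Suc n) = ln (g w)"
    and "summable (\<lambda>n. \<bar>(- real (Suc n)) ^ n / fact (Suc n) * (w * ln w) ^ Suc n\<bar>)"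
    using neg_tree_series_Suc_sums[OF t] by (simp_all add: sums_iff g w_ln_w)
  moreover have "w \<le> exp (-1) \<Longrightarrow> g w = f w"
    by (simp add: f_def g_def)
  moreover have "exp (-1) \<le> w \<Longrightarrow> g w = w"
    using r_inv_phi[OF _ assms(2)] by (simp add: g_def)
  moreover have "0 < g w"
    by (simp add: g)
  ultimately show ?thesis
    using ln_g by auto
qed

end
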